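(* Let $\kappa\ge1$, $n=\kappa+1$, and let $G\in\mathcal G_{[n;\kappa]}$ be skew-symmetric. Then $G$ is a zero-sum game: $\sum_{i=1}^n c_i(x)=0$ for every profile $x\in\{1,\dots,\kappa\}^n$.
   Context: A finite game $G\in\mathcal G_{[n;\kappa]}$ has players $\{1,\dots,n\}$, each with strategy set $\{1,\dots,\kappa\}$, and payoff functions $c_i:\{1,\dots,\kappa\}^n\to\mathbb R$. $G$ is skew-symmetric if for every permutation $\sigma\in\mathbf S_n$, every $i$ and every profile, $c_i(x_1,\dots,x_n)=\mathrm{sgn}(\sigma)\,c_{\sigma(i)}(x_{\sigma^{-1}(1)},\dots,x_{\sigma^{-1}(n)})$. *)

theory Defs
  imports "HOL-Library.FuncSet" "HOL-Combinatorics.Permutations" Complex_Main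
begin

definition profiles :: "nat \<Rightarrow> nat \<Rightarrow> (nat \<Rightarrow> nat) set" where
  "profiles n \<kappa> = {1..n} \<rightarrow>\<^sub>E {1..\<kappa>}"

definition skew_symmetric :: "nat \<Rightarrow> nat \<Rightarrow> (nat \<Rightarrow> (nat \<Rightarrow> nat) \<Rightarrow> real) \<Rightarrow> bool" where
  "skew_symmetric n \<kappa> c \<longleftrightarrow>
     (\<forall>\<sigma>. \<sigma> permutes {1..n} \<longrightarrow>
        (\<forall>i\<in>{1..n}. \<forall>x\<in>profiles n \<kappa>.
           c i x = of_int (sign \<sigma>) * c (\<sigma> i) (\<lambda>j. x (inv \<sigma> j))))"

definition zero_sum :: "nat \<Rightarrow> nat \<Rightarrow> (nat \<Rightarrow> (nat \<Rightarrow> nat) \<Rightarrow> real) \<Rightarrow> bool" where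
  "zero_sum n \<kappa> c \<longleftrightarrow> (\<forall>x\<in>profiles n \<kappa>. (\<Sum>i=1..n. c i x) = 0)"

end

theory Submission
  imports Defs
begin

(* With fewer strategies than players, every profile gives two distinct players a and b the
   same strategy. The transposition of a and b fixes the profile and has sign -1, so
   skew-symmetry makes every other payoff equal to its own negative and gives
   c_a = -c_b; the payoffs therefore sum to zero. *)

lemma profile_repeats_strategy:
  assumes "x \<in> profiles n \<kappa>" and "\<kappa> < n"
  obtains a b where "a \<in> {1..n}" "b \<in> {1..n}" "a \<noteq> b" "x a = x b"
proof -
  have "x \<in> {1..n} \<rightarrow> {1..\<kappa>}"
    using assms(1) unfolding profiles_def by auto
  then have "\<not> inj_on x {1..n}"
    using card_inj_on_le[of x "{1..n}" "{1..\<kappa>}"] assms(2) by auto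
  then show thesis
    using that unfolding inj_on_def by blast
qed

lemma skew_symmetric_swap_players:
  assumes skew: "skew_symmetric n \<kappa> c" and x: "x \<in> profiles n \<kappa>"
    and ab: "a \<in> {1..n}" "b \<in> {1..n}" "a \<noteq> b" "x a = x b"
    and i: "i \<in> {1..n}"
  shows "c i x = - c (transpose a b i) x"
proof -
  let ?\<tau> = "transpose a b"
  have "?\<tau> permutes {1..n}"
    using ab by (simp add: permutes_swap_id)
  moreover have "sign ?\<tau> = -1"
    using ab by (simp add: sign_swap_id)
  moreover have "(\<lambda>j. x (inv ?\<tau> j)) = x"
    using ab by (auto simp: transpose_def)
  ultimately show ?thesis
    using skew x i unfolding skew_symmetric_def by fastforce
qed

lemma skew_symmetric_sum_eq_0_if_repeated_strategy:
  assumes skew: "skew_symmetric n \<kappa> c" and x: "x \<in> profiles n \<kappa>"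
    and ab: "a \<in> {1..n}" "b \<in> {1..n}" "a \<noteq> b" "x a = x b"
  shows "(\<Sum>i=1..n. c i x) = 0"
proof -
  note swap = skew_symmetric_swap_players[OF skew x ab]
  have others: "c i x = 0" if "i \<in> {1..n} - {a, b}" for i
    using swap[of i] that by simp
  have "c a x = - c b x"
    using swap[of a] ab by simp
  have "(\<Sum>i=1..n. c i x) = (\<Sum>i\<in>{a, b}. c i x)"
    by (rule sum.mono_neutral_right) (use ab others in auto)
  also have "\<dots> = 0"
    using ab \<open>c a x = - c b x\<close> by simp
  finally show ?thesis .
qed

lemma skew_symmetric_zero_sum_if_less_strategies:
  assumes "skew_symmetric n \<kappa> c" and "\<kappa> < n"
  shows "zero_sum n \<kappa> c"
  unfolding zero_sum_def
proof
  fix x assume x: "x \<in> profiles n \<kappa>"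
  then obtain a b where "a \<in> {1..n}" "b \<in> {1..n}" "a \<noteq> b" "x a = x b"
    using profile_repeats_strategy assms(2) by blast
  then show "(\<Sum>i=1..n. c i x) = 0"
    using skew_symmetric_sum_eq_0_if_repeated_strategy assms(1) x by blast
qed

theorem proposition4p2:
  fixes \<kappa> n :: nat and c :: "nat \<Rightarrow> (nat \<Rightarrow> nat) \<Rightarrow> real"
  assumes "\<kappa> \<ge> 1" and "n = \<kappa> + 1"
    and "skew_symmetric n \<kappa> c"
  shows "zero_sum n \<kappa> c"
  using skew_symmetric_zero_sum_if_less_strategies assms(2,3) by simp

end
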